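(* Let $N\ge2$, $L\ge1$, and let $a_k(\xi_i,\xi_j)$, $k=1,\dots,N$, be nonvanishing functions with $a_k(\xi_i,\xi_j)a_k(\xi_j,\xi_i)=1$. On $V_1\otimes\cdots\otimes V_L$ ($V_j\cong\mathbb{C}^N$) define the diagonal operators $$\mathcal N_{ij}=\mathcal I_i\otimes\mathcal I_j-\sum_{k=1}^N e^{(kk)}_i\otimes e^{(kk)}_j+\sum_{k=1}^N\sqrt{a_k(\xi_i,\xi_j)}\,e^{(kk)}_i\otimes e^{(kk)}_j,\qquad \mathcal R_{ij}=\mathcal I_i\otimes\mathcal I_j-\sum_{k=1}^N e^{(kk)}_i\otimes e^{(kk)}_j+\sum_{k=1}^N a_k(\xi_i,\xi_j)\,e^{(kk)}_i\otimes e^{(kk)}_j,$$ and $\mathcal N_{1\dots L}=\mathcal N_{(L-1)L}\mathcal N_{L-2,(L-1)L}\cdots\mathcal N_{1,2\dots L}$ with $\mathcal N_{i,(i+1)\dots L}=\mathcal N_{iL}\mathcal N_{i(L-1)}\cdots\mathcal N_{i(i+1)}$. Then for all $\sigma\in S_L$, $$\mathcal N^{-1}_{\sigma(1\dots L)}\,\mathcal N_{1\dots L}=\mathcal R^{\{\sigma\}}_{1\dots L},$$ where $\mathcal R^{\{\sigma\}}_{1\dots L}=P^{\{\sigma\}}_{1\dots L}\hat{\mathcal R}^{\{\sigma^{-1}\}}_{1\dots L}$, with, for a minimal decomposition $\sigma=\sigma_{\alpha_p(\alpha_p+1)}\cdots\sigma_{\alpha_1(\alpha_1+1)}$ into adjacent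 transpositions, $P^{\{\sigma\}}_{1\dots L}=P_{\alpha_p(\alpha_p+1)}\cdots P_{\alpha_1(\alpha_1+1)}$, $\hat{\mathcal R}^{\{\sigma^{-1}\}}_{1\dots L}=\hat{\mathcal R}_{\alpha_1}\hat{\mathcal R}_{\alpha_2}\cdots\hat{\mathcal R}_{\alpha_p}$ and $\hat{\mathcal R}_\alpha=P_{\alpha(\alpha+1)}\mathcal R_{\alpha(\alpha+1)}(\xi_\alpha,\xi_{\alpha+1})$.
   Context: $e^{(kk)}_j$ is the $N\times N$ diagonal Weyl matrix acting on $V_j$, $\mathcal I_j$ the identity on $V_j$, and $P_{\alpha(\alpha+1)}$ the operator permuting the tensor factors $V_\alpha$ and $V_{\alpha+1}$. For an operator $X_{1\dots L}(\xi_1,\dots,\xi_L)$, $X_{\sigma(1\dots L)}$ denotes $X_{\sigma(1)\dots\sigma(L)}(\xi_{\sigma(1)},\dots,\xi_{\sigma(L)})=P^{\{\sigma\}}_{1\dots L}X_{1\dots L}P^{\{\sigma^{-1}\}}_{1\dots L}$. Square roots are chosen so that $\sqrt{a_k(\xi_i,\xi_j)}\sqrt{a_k(\xi_j,\xi_i)}=1$. *)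

theory Defs
  imports Complex_Main "HOL-Combinatorics.Permutations"
begin

text \<open>Sites are 0..L-1 (paper: 1..L), colours 0..N-1 (paper: 1..N).
  A basis configuration of V_1 (x) ... (x) V_L is a map c from sites to colours;
  a vector is a function on configurations, an operator a map on vectors.\<close>

type_synonym cfg = "nat \<Rightarrow> nat"
type_synonym vec = "cfg \<Rightarrow> complex"
type_synonym oper = "vec \<Rightarrow> vec"

definition cfgs :: "nat \<Rightarrow> nat \<Rightarrow> cfg set" where
  "cfgs N L = {c. (\<forall>i<L. c i < N) \<and> (\<forall>i. L \<le> i \<longrightarrow> c i = 0)}"

definition diag_op :: "(cfg \<Rightarrow> complex) \<Rightarrow> oper" where
  "diag_op d v = (\<lambda>c. d c * v c)"

definition eW :: "nat \<Rightarrow> nat \<Rightarrow> cfg \<Rightarrow> complex" where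
  "eW k i c = (if c i = k then 1 else 0)"

definition two_site :: "nat \<Rightarrow> (nat \<Rightarrow> complex \<Rightarrow> complex \<Rightarrow> complex)
    \<Rightarrow> nat \<Rightarrow> nat \<Rightarrow> complex \<Rightarrow> complex \<Rightarrow> oper" where
  "two_site N b i j x y = diag_op (\<lambda>c. 1 - (\<Sum>k<N. eW k i c * eW k j c)
                                         + (\<Sum>k<N. b k x y * eW k i c * eW k j c))"

definition Nop :: "nat \<Rightarrow> (nat \<Rightarrow> complex \<Rightarrow> complex \<Rightarrow> complex) \<Rightarrow> (nat \<Rightarrow> complex)
    \<Rightarrow> nat \<Rightarrow> nat \<Rightarrow> oper" where
  "Nop N sq \<xi> i j = two_site N sq i j (\<xi> i) (\<xi> j)"

definition Nrow :: "nat \<Rightarrow> nat \<Rightarrow> (nat \<Rightarrow> complex \<Rightarrow> complex \<Rightarrow> complex) \<Rightarrow> (nat \<Rightarrow> complex)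
    \<Rightarrow> (nat \<Rightarrow> nat) \<Rightarrow> nat \<Rightarrow> oper" where
  "Nrow N L sq \<xi> s i = fold (\<lambda>j acc. Nop N sq \<xi> (s i) (s j) \<circ> acc) [Suc i..<L] id"

text \<open>N_{s(1...L)} = N_{s(L-1)s(L)} ... N_{s(1),s(2...L)}; N_{1...L} is the case s = id,
  and N_{sigma(1...L)} = N_{sigma(1)...sigma(L)}(xi_sigma(1),...,xi_sigma(L)) the case s = sigma.\<close>
definition Nprod :: "nat \<Rightarrow> nat \<Rightarrow> (nat \<Rightarrow> complex \<Rightarrow> complex \<Rightarrow> complex) \<Rightarrow> (nat \<Rightarrow> complex)
    \<Rightarrow> (nat \<Rightarrow> nat) \<Rightarrow> oper" where
  "Nprod N L sq \<xi> s = fold (\<lambda>i acc. Nrow N L sq \<xi> s i \<circ> acc) [0..<L] id"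

definition Pop :: "nat \<Rightarrow> oper" where
  "Pop \<alpha> v = (\<lambda>c. v (c \<circ> transpose \<alpha> (Suc \<alpha>)))"

definition perm_of :: "nat list \<Rightarrow> nat \<Rightarrow> nat" where
  "perm_of \<alpha>s = fold (\<lambda>\<alpha> acc. transpose \<alpha> (Suc \<alpha>) \<circ> acc) \<alpha>s id"

definition adj_decomp :: "nat \<Rightarrow> (nat \<Rightarrow> nat) \<Rightarrow> nat list \<Rightarrow> bool" where
  "adj_decomp L \<sigma> \<alpha>s \<longleftrightarrow> (\<forall>\<alpha>\<in>set \<alpha>s. Suc \<alpha> < L) \<and> \<sigma> = perm_of \<alpha>s"

definition min_adj_decomp :: "nat \<Rightarrow> (nat \<Rightarrow> nat) \<Rightarrow> nat list \<Rightarrow> bool" where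
  "min_adj_decomp L \<sigma> \<alpha>s \<longleftrightarrow> adj_decomp L \<sigma> \<alpha>s \<and>
     (\<forall>\<beta>s. adj_decomp L \<sigma> \<beta>s \<longrightarrow> length \<alpha>s \<le> length \<beta>s)"

definition Pperm :: "nat list \<Rightarrow> oper" where
  "Pperm \<alpha>s = fold (\<lambda>\<alpha> acc. Pop \<alpha> \<circ> acc) \<alpha>s id"

definition Rhat :: "nat \<Rightarrow> (nat \<Rightarrow> complex \<Rightarrow> complex \<Rightarrow> complex) \<Rightarrow> nat \<Rightarrow> complex \<Rightarrow> complex \<Rightarrow> oper" where
  "Rhat N a \<alpha> x y = Pop \<alpha> \<circ> two_site N a \<alpha> (Suc \<alpha>) x y"

text \<open>The spectral parameters carried by
  each Rhat_{alpha_j} are those of the spaces currently sitting at positions alpha_j, alpha_j+1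
  after the factors Rhat_{alpha_{j+1}} ... Rhat_{alpha_p} (applied first) have permuted them,
  i.e. xi relabelled by sigma_{alpha_p} o ... o sigma_{alpha_{j+1}}.\<close>
fun Rhat_chain :: "nat \<Rightarrow> (nat \<Rightarrow> complex \<Rightarrow> complex \<Rightarrow> complex) \<Rightarrow> (nat \<Rightarrow> complex)
    \<Rightarrow> nat list \<Rightarrow> oper" where
  "Rhat_chain N a \<xi> [] = id"
| "Rhat_chain N a \<xi> (\<alpha> # \<alpha>s) =
     Rhat N a \<alpha> (\<xi> (perm_of \<alpha>s \<alpha>)) (\<xi> (perm_of \<alpha>s (Suc \<alpha>))) \<circ> Rhat_chain N a \<xi> \<alpha>s"

definition Rsig :: "nat \<Rightarrow> (nat \<Rightarrow> complex \<Rightarrow> complex \<Rightarrow> complex) \<Rightarrow> (nat \<Rightarrow> complex)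
    \<Rightarrow> nat list \<Rightarrow> oper" where
  "Rsig N a \<xi> \<alpha>s = Pperm \<alpha>s \<circ> Rhat_chain N a \<xi> \<alpha>s"

end

theory Submission
  imports Defs
begin

text \<open>Every operator involved is diagonal in the colour basis. The diagonal of
  \<open>N\<^bsub>s(1\<dots>L)\<^esub>\<close> is a product over all pairs \<open>i < j\<close> of the two-site entries at sites
  \<open>s i, s j\<close>; composing \<open>s\<close> with an adjacent transposition \<open>(\<alpha> \<alpha>+1)\<close> only reverses the pair
  \<open>(\<alpha>, \<alpha>+1)\<close>, turning the factor \<open>\<surd>a(x,y)\<close> into \<open>\<surd>a(y,x) = \<surd>a(x,y) / a(x,y)\<close>. Hence
  \<open>N\<^sub>\<sigma>\<^sup>-\<^sup>1 N\<close> telescopes to the product of the \<open>a\<close>-entries met along the decomposition of \<open>\<sigma>\<close>.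
  On the other side the permutations in \<open>P\<^bsup>{\<sigma>}\<^esup> R\<^bsup>{\<sigma>\<^sup>-\<^sup>1}\<^esup>\<close> cancel, leaving the same
  diagonal operator.\<close>

lemma fold_comp_eq_comp:
  fixes g :: "'b \<Rightarrow> 'b"
  shows "fold (\<lambda>x acc. h x \<circ> acc) xs g = fold (\<lambda>x acc. h x \<circ> acc) xs id \<circ> g"
proof (induction xs arbitrary: g)
  case Nil
  then show ?case by simp
next
  case (Cons x xs)
  have "fold (\<lambda>x acc. h x \<circ> acc) (x # xs) g = fold (\<lambda>x acc. h x \<circ> acc) xs (h x \<circ> g)"
    and "fold (\<lambda>x acc. h x \<circ> acc) (x # xs) id = fold (\<lambda>x acc. h x \<circ> acc) xs (h x)"
    by simp_all
  then show ?case
    by (simp only: Cons.IH[of "h x \<circ> g"] Cons.IH[of "h x"] comp_assoc)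
qed

lemma fold_comp_diag_op:
  "fold (\<lambda>x acc. diag_op (d x) \<circ> acc) xs id = diag_op (\<lambda>c. \<Prod>x\<leftarrow>xs. d x c)"
  by (induction xs rule: rev_induct) (simp_all add: diag_op_def fun_eq_iff mult.commute)

lemma inv_diag_op:
  assumes "\<And>c. d c \<noteq> 0"
  shows "inv (diag_op d) = diag_op (\<lambda>c. 1 / d c)"
  by (rule inv_unique_comp) (auto simp: fun_eq_iff diag_op_def assms)

definition two_site_entry :: "nat \<Rightarrow> (nat \<Rightarrow> complex \<Rightarrow> complex \<Rightarrow> complex)
    \<Rightarrow> nat \<Rightarrow> nat \<Rightarrow> complex \<Rightarrow> complex \<Rightarrow> cfg \<Rightarrow> complex" where
  "two_site_entry N b i j x y c = (if c i = c j \<and> c i < N then b (c i) x y else 1)"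

lemma sum_eW_pair:
  "(\<Sum>k<N. f k * eW k i c * eW k j c) = (if c i = c j \<and> c i < N then f (c i) else 0)"
proof -
  have "(\<Sum>k<N. f k * eW k i c * eW k j c) = (\<Sum>k<N. if k = c i then (if c i = c j then f k else 0) else 0)"
    by (rule sum.cong) (auto simp: eW_def)
  then show ?thesis by (simp add: sum.delta')
qed

lemma two_site_eq_diag_op: "two_site N b i j x y = diag_op (two_site_entry N b i j x y)"
  using sum_eW_pair[where f = "\<lambda>_. 1"] sum_eW_pair[where f = "\<lambda>k. b k x y"]
  by (auto simp: two_site_def two_site_entry_def diag_op_def fun_eq_iff)

lemma two_site_entry_sqrt_swap:
  assumes sq_square: "\<forall>k<N. \<forall>x y. (sq k x y)\<^sup>2 = a k x y"
    and sq_inverse: "\<forall>k<N. \<forall>x y. sq k x y * sq k y x = 1"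
  shows "two_site_entry N sq j i y x c * two_site_entry N a i j x y c = two_site_entry N sq i j x y c"
proof (cases "c i = c j \<and> c i < N")
  case True
  let ?k = "c i"
  have "sq ?k y x * a ?k x y = (sq ?k y x * sq ?k x y) * sq ?k x y"
    using sq_square True by (simp add: power2_eq_square)
  also have "\<dots> = sq ?k x y"
    using sq_inverse True by simp
  finally show ?thesis
    using True by (simp add: two_site_entry_def)
qed (auto simp: two_site_entry_def)

lemma two_site_entry_nonzero:
  assumes "\<forall>k<N. \<forall>x y. sq k x y * sq k y x = 1"
  shows "two_site_entry N sq i j x y c \<noteq> 0"
proof (cases "c i = c j \<and> c i < N")
  case True
  then have "sq (c i) x y * sq (c i) y x = 1"
    using assms by blast
  then show ?thesis
    using True by (auto simp: two_site_entry_def)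
qed (auto simp: two_site_entry_def)

definition ordered_pairs :: "nat \<Rightarrow> (nat \<times> nat) set" where
  "ordered_pairs L = {(i, j). i < j \<and> j < L}"

lemma finite_ordered_pairs: "finite (ordered_pairs L)"
  by (rule finite_subset[of _ "{..<L} \<times> {..<L}"]) (auto simp: ordered_pairs_def)

lemma prod_ordered_pairs_adjacent_swap:
  fixes h :: "nat \<times> nat \<Rightarrow> 'a::comm_monoid_mult"
  assumes "Suc \<alpha> < L"
  defines "t \<equiv> transpose \<alpha> (Suc \<alpha>)"
  shows "(\<Prod>(i, j)\<in>ordered_pairs L. h (t i, t j))
       = h (Suc \<alpha>, \<alpha>) * (\<Prod>p\<in>ordered_pairs L - {(\<alpha>, Suc \<alpha>)}. h p)"
proof -
  define P where "P = ordered_pairs L - {(\<alpha>, Suc \<alpha>)}"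
  have mem: "(\<alpha>, Suc \<alpha>) \<in> ordered_pairs L"
    using assms by (simp add: ordered_pairs_def)
  have t_t: "t (t x) = x" for x
    by (simp add: t_def transpose_def)
  have t_maps: "map_prod t t p \<in> P" if "p \<in> P" for p
    using that assms(1) unfolding P_def ordered_pairs_def t_def transpose_def by (cases p) auto
  have "(\<Prod>(i, j)\<in>ordered_pairs L. h (t i, t j)) = (\<Prod>p\<in>ordered_pairs L. h (map_prod t t p))"
    by (rule prod.cong) auto
  also have "\<dots> = h (map_prod t t (\<alpha>, Suc \<alpha>)) * (\<Prod>p\<in>P. h (map_prod t t p))"
    unfolding P_def by (rule prod.remove[OF finite_ordered_pairs mem])
  also have "(\<Prod>p\<in>P. h (map_prod t t p)) = (\<Prod>p\<in>P. h p)"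
    by (rule prod.reindex_bij_witness[where i = "map_prod t t" and j = "map_prod t t"])
       (auto simp: t_t t_maps)
  finally show ?thesis
    by (simp add: t_def P_def)
qed

definition Nprod_entry :: "nat \<Rightarrow> nat \<Rightarrow> (nat \<Rightarrow> complex \<Rightarrow> complex \<Rightarrow> complex) \<Rightarrow> (nat \<Rightarrow> complex)
    \<Rightarrow> (nat \<Rightarrow> nat) \<Rightarrow> cfg \<Rightarrow> complex" where
  "Nprod_entry N L sq \<xi> s c =
     (\<Prod>(i, j)\<in>ordered_pairs L. two_site_entry N sq (s i) (s j) (\<xi> (s i)) (\<xi> (s j)) c)"

lemma Nprod_eq_diag_op: "Nprod N L sq \<xi> s = diag_op (Nprod_entry N L sq \<xi> s)"
proof -
  let ?e = "\<lambda>i j. two_site_entry N sq (s i) (s j) (\<xi> (s i)) (\<xi> (s j))"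
  have row: "Nrow N L sq \<xi> s i = diag_op (\<lambda>c. \<Prod>j\<in>{Suc i..<L}. ?e i j c)" for i
    unfolding Nrow_def Nop_def two_site_eq_diag_op fold_comp_diag_op
    by (simp add: prod.distinct_set_conv_list[symmetric])
  have pairs: "Sigma {0..<L} (\<lambda>i. {Suc i..<L}) = ordered_pairs L"
    by (auto simp: ordered_pairs_def)
  have "Nprod N L sq \<xi> s = diag_op (\<lambda>c. \<Prod>i\<in>{0..<L}. \<Prod>j\<in>{Suc i..<L}. ?e i j c)"
    unfolding Nprod_def row fold_comp_diag_op
    by (simp add: prod.distinct_set_conv_list[symmetric])
  then show ?thesis
    unfolding Nprod_entry_def by (simp add: prod.Sigma pairs)
qed

lemma Nprod_entry_nonzero:
  assumes "\<forall>k<N. \<forall>x y. sq k x y * sq k y x = 1"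
  shows "Nprod_entry N L sq \<xi> s c \<noteq> 0"
  using two_site_entry_nonzero[OF assms] finite_ordered_pairs
  by (auto simp: Nprod_entry_def prod_zero_iff)

lemma Nprod_entry_adjacent_swap:
  assumes sq_square: "\<forall>k<N. \<forall>x y. (sq k x y)\<^sup>2 = a k x y"
    and sq_inverse: "\<forall>k<N. \<forall>x y. sq k x y * sq k y x = 1"
    and "Suc \<alpha> < L"
  shows "Nprod_entry N L sq \<xi> (s \<circ> transpose \<alpha> (Suc \<alpha>)) c
           * two_site_entry N a (s \<alpha>) (s (Suc \<alpha>)) (\<xi> (s \<alpha>)) (\<xi> (s (Suc \<alpha>))) c
       = Nprod_entry N L sq \<xi> s c"
proof -
  define h where "h = (\<lambda>(i, j). two_site_entry N sq (s i) (s j) (\<xi> (s i)) (\<xi> (s j)) c)"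
  let ?rest = "\<Prod>p\<in>ordered_pairs L - {(\<alpha>, Suc \<alpha>)}. h p"
  have swapped: "Nprod_entry N L sq \<xi> (s \<circ> transpose \<alpha> (Suc \<alpha>)) c = h (Suc \<alpha>, \<alpha>) * ?rest"
    using prod_ordered_pairs_adjacent_swap[OF assms(3), of h]
    by (simp add: Nprod_entry_def h_def case_prod_unfold)
  have unswapped: "Nprod_entry N L sq \<xi> s c = h (\<alpha>, Suc \<alpha>) * ?rest"
    unfolding Nprod_entry_def h_def
    by (rule prod.remove[OF finite_ordered_pairs]) (use assms(3) in \<open>simp add: ordered_pairs_def\<close>)
  have "h (Suc \<alpha>, \<alpha>) * two_site_entry N a (s \<alpha>) (s (Suc \<alpha>)) (\<xi> (s \<alpha>)) (\<xi> (s (Suc \<alpha>))) c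
      = h (\<alpha>, Suc \<alpha>)"
    unfolding h_def using two_site_entry_sqrt_swap[OF sq_square sq_inverse] by simp
  then show ?thesis
    unfolding swapped unswapped by (simp add: algebra_simps)
qed

lemma perm_of_Cons: "perm_of (\<alpha> # \<alpha>s) = perm_of \<alpha>s \<circ> transpose \<alpha> (Suc \<alpha>)"
  unfolding perm_of_def by (simp add: fold_comp_eq_comp[where g = "transpose \<alpha> (Suc \<alpha>)"])

lemma Pperm_Cons: "Pperm (\<alpha> # \<alpha>s) = Pperm \<alpha>s \<circ> Pop \<alpha>"
  unfolding Pperm_def by (simp add: fold_comp_eq_comp[where g = "Pop \<alpha>"])

lemma Pperm_apply: "Pperm \<alpha>s v c = v (c \<circ> perm_of \<alpha>s)"
proof (induction \<alpha>s arbitrary: v c)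
  case Nil
  then show ?case by (simp add: Pperm_def perm_of_def)
next
  case (Cons \<alpha> \<alpha>s)
  then show ?case by (simp add: Pperm_Cons perm_of_Cons Pop_def comp_def)
qed

text \<open>The eigenvalue of \<open>P\<^bsup>{\<sigma>}\<^esup> R\<^bsup>{\<sigma>\<^sup>-\<^sup>1}\<^esup>\<close>: each \<open>R\<^sub>\<alpha>\<close> contributes the \<open>a\<close>-entry of the two sites
  it acts on, as labelled before the later factors permute them.\<close>

fun Rsig_entry :: "nat \<Rightarrow> (nat \<Rightarrow> complex \<Rightarrow> complex \<Rightarrow> complex) \<Rightarrow> (nat \<Rightarrow> complex)
    \<Rightarrow> nat list \<Rightarrow> cfg \<Rightarrow> complex" where
  "Rsig_entry N a \<xi> [] c = 1"
| "Rsig_entry N a \<xi> (\<alpha> # \<alpha>s) c =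
     two_site_entry N a (perm_of \<alpha>s \<alpha>) (perm_of \<alpha>s (Suc \<alpha>))
       (\<xi> (perm_of \<alpha>s \<alpha>)) (\<xi> (perm_of \<alpha>s (Suc \<alpha>))) c * Rsig_entry N a \<xi> \<alpha>s c"

lemma Rhat_chain_apply:
  "Rhat_chain N a \<xi> \<alpha>s v (c \<circ> perm_of \<alpha>s) = Rsig_entry N a \<xi> \<alpha>s c * v c"
proof (induction \<alpha>s arbitrary: c)
  case Nil
  then show ?case by (simp add: perm_of_def)
next
  case (Cons \<alpha> \<alpha>s)
  let ?q = "perm_of \<alpha>s"
  have transpose_twice: "c \<circ> ?q \<circ> transpose \<alpha> (Suc \<alpha>) \<circ> transpose \<alpha> (Suc \<alpha>) = c \<circ> ?q"
    by (simp add: fun_eq_iff transpose_def)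
  have "Rhat_chain N a \<xi> (\<alpha> # \<alpha>s) v (c \<circ> perm_of (\<alpha> # \<alpha>s))
      = two_site N a \<alpha> (Suc \<alpha>) (\<xi> (?q \<alpha>)) (\<xi> (?q (Suc \<alpha>))) (Rhat_chain N a \<xi> \<alpha>s v) (c \<circ> ?q)"
    by (simp add: perm_of_Cons Rhat_def Pop_def comp_assoc transpose_twice)
  also have "\<dots> = Rsig_entry N a \<xi> (\<alpha> # \<alpha>s) c * v c"
    by (simp add: two_site_eq_diag_op diag_op_def Cons.IH two_site_entry_def)
  finally show ?case .
qed

lemma Rsig_apply: "Rsig N a \<xi> \<alpha>s v c = Rsig_entry N a \<xi> \<alpha>s c * v c"
  unfolding Rsig_def by (simp add: Pperm_apply Rhat_chain_apply)

lemma Nprod_entry_telescope: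
  assumes "\<forall>k<N. \<forall>x y. (sq k x y)\<^sup>2 = a k x y"
    and "\<forall>k<N. \<forall>x y. sq k x y * sq k y x = 1"
    and "\<forall>\<alpha>\<in>set \<alpha>s. Suc \<alpha> < L"
  shows "Nprod_entry N L sq \<xi> id c = Nprod_entry N L sq \<xi> (perm_of \<alpha>s) c * Rsig_entry N a \<xi> \<alpha>s c"
  using assms(3)
proof (induction \<alpha>s)
  case Nil
  then show ?case by (simp add: perm_of_def)
next
  case (Cons \<alpha> \<alpha>s)
  then show ?case
    using Nprod_entry_adjacent_swap[OF assms(1,2), of \<alpha> L \<xi> "perm_of \<alpha>s" c]
    by (simp add: perm_of_Cons algebra_simps del: comp_apply)
qed

text \<open>Only the two hypotheses on \<open>sq\<close> and the fact that \<open>\<alpha>s\<close> decomposes \<open>\<sigma>\<close> are needed.\<close>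

theorem proposition1:
  fixes N L :: nat
    and a sq :: "nat \<Rightarrow> complex \<Rightarrow> complex \<Rightarrow> complex"
    and \<xi> :: "nat \<Rightarrow> complex"
    and \<sigma> :: "nat \<Rightarrow> nat"
    and \<alpha>s :: "nat list"
  assumes "N \<ge> 2" and "L \<ge> 1"
    and "\<forall>k<N. \<forall>x y. a k x y \<noteq> 0"
    and "\<forall>k<N. \<forall>x y. a k x y * a k y x = 1"
    and "\<forall>k<N. \<forall>x y. (sq k x y)\<^sup>2 = a k x y"
    and "\<forall>k<N. \<forall>x y. sq k x y * sq k y x = 1"
    and "\<sigma> permutes {..<L}"
    and "min_adj_decomp L \<sigma> \<alpha>s"
  shows "\<forall>v. \<forall>c\<in>cfgs N L.
           (inv (Nprod N L sq \<xi> \<sigma>) \<circ> Nprod N L sq \<xi> id) v c = Rsig N a \<xi> \<alpha>s v c"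
proof (intro allI ballI)
  fix v c
  from assms(8) have decomp: "\<forall>\<alpha>\<in>set \<alpha>s. Suc \<alpha> < L" and \<sigma>: "\<sigma> = perm_of \<alpha>s"
    by (auto simp: min_adj_decomp_def adj_decomp_def)
  have nonzero: "\<And>c. Nprod_entry N L sq \<xi> \<sigma> c \<noteq> 0"
    using Nprod_entry_nonzero[OF assms(6)] by blast
  have "(inv (Nprod N L sq \<xi> \<sigma>) \<circ> Nprod N L sq \<xi> id) v c
      = Nprod_entry N L sq \<xi> id c * v c / Nprod_entry N L sq \<xi> \<sigma> c"
    unfolding Nprod_eq_diag_op inv_diag_op[OF nonzero] by (simp add: diag_op_def)
  also have "\<dots> = Rsig_entry N a \<xi> \<alpha>s c * v c"
    using Nprod_entry_telescope[OF assms(5,6) decomp, of \<xi> c] nonzero[of c] \<sigma>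
    by (simp add: field_simps)
  also have "\<dots> = Rsig N a \<xi> \<alpha>s v c"
    by (simp add: Rsig_apply)
  finally show "(inv (Nprod N L sq \<xi> \<sigma>) \<circ> Nprod N L sq \<xi> id) v c = Rsig N a \<xi> \<alpha>s v c" .
qed

end
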